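(* Let $f(\mathbf z)$ be a holomorphic function of $n$ variables defined near the origin, let $a,b$ be non-negative integers with $a>b\ge0$ (respectively $0\le a<b$), and let $g(\mathbf w,\bar{\mathbf w})=f(w_1^a\bar w_1^b,\dots,w_n^a\bar w_n^b)$. Then $g$ is holomorphic-like (respectively anti-holomorphic-like) in a neighborhood of the origin, i.e. there is a neighborhood $U$ of the origin such that $C_g(\mathbf w,\bar{\mathbf w})\ge0$ (respectively $\le 0$) for all $\mathbf w\in g^{-1}(0)\cap U$.
   Context: For a mixed function $g(\mathbf w,\bar{\mathbf w})$ write $g_{w_j}=\partial g/\partial w_j$, $g_{\bar w_j}=\partial g/\partial\bar w_j$, and set $C_{j,k}=|w_j\overline{g_{w_k}}-w_k\overline{g_{w_j}}|^2-|w_jg_{\bar w_k}-w_kg_{\bar w_j}|^2$, $C_g(\mathbf w,\bar{\mathbf w})=\sum_{1\le j<k\le n}C_{j,k}$. The paper calls a mixed function with an isolated mixed singularity at the origin holomorphic-like (resp. anti-holomorphic-like) on a neighborhood $U$ of $0$ if $C_g\ge0$ (resp. $\le0$) at every point of $g^{-1}(0)\cap U$. *)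

theory Defs
  imports "HOL-Analysis.Analysis"
begin

text \<open>Points of C^n are vectors in complex^'n; the index type is finite and
linearly ordered so that the sum over pairs j < k makes sense.\<close>

definition holomorphic_vec_on :: "(complex^'n \<Rightarrow> complex) \<Rightarrow> (complex^'n) set \<Rightarrow> bool" where
  "holomorphic_vec_on f S \<longleftrightarrow>
     (\<forall>z\<in>S. \<exists>L. (f has_derivative L) (at z) \<and> (\<forall>c v. L (c *s v) = c * L v))"

text \<open>Real partial derivatives d/dx_j, d/dy_j (w_j = x_j + i y_j) and
Wirtinger derivatives of a mixed function g at w.\<close>
definition dx :: "(complex^'n \<Rightarrow> complex) \<Rightarrow> complex^'n \<Rightarrow> 'n \<Rightarrow> complex" where
  "dx g w j = frechet_derivative g (at w) (axis j 1)"

definition dy :: "(complex^'n \<Rightarrow> complex) \<Rightarrow> complex^'n \<Rightarrow> 'n \<Rightarrow> complex" where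
  "dy g w j = frechet_derivative g (at w) (axis j \<i>)"

definition wirt_w :: "(complex^'n \<Rightarrow> complex) \<Rightarrow> complex^'n \<Rightarrow> 'n \<Rightarrow> complex" where
  "wirt_w g w j = (dx g w j - \<i> * dy g w j) / 2"

definition wirt_wbar :: "(complex^'n \<Rightarrow> complex) \<Rightarrow> complex^'n \<Rightarrow> 'n \<Rightarrow> complex" where
  "wirt_wbar g w j = (dx g w j + \<i> * dy g w j) / 2"

definition C_jk :: "(complex^'n \<Rightarrow> complex) \<Rightarrow> complex^'n \<Rightarrow> 'n \<Rightarrow> 'n \<Rightarrow> real" where
  "C_jk g w j k =
     (cmod (w$j * cnj (wirt_w g w k) - w$k * cnj (wirt_w g w j)))\<^sup>2
   - (cmod (w$j * wirt_wbar g w k - w$k * wirt_wbar g w j))\<^sup>2"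

definition C_g :: "(complex^('n::{finite,linorder}) \<Rightarrow> complex) \<Rightarrow> complex^('n::{finite,linorder}) \<Rightarrow> real" where
  "C_g g w = (\<Sum>j\<in>UNIV. \<Sum>k\<in>{k. j < k}. C_jk g w j k)"

definition mixed_pullback :: "(complex^'n \<Rightarrow> complex) \<Rightarrow> nat \<Rightarrow> nat \<Rightarrow> complex^'n \<Rightarrow> complex" where
  "mixed_pullback f a b w = f (\<chi> j. w$j ^ a * cnj (w$j) ^ b)"

end

theory Submission
  imports Defs
begin

text \<open>Write g = f \<circ> h with h(w) = (w_j^a conj(w_j)^b)_j. Because f is complex linear to
first order and h acts coordinatewise, the chain rule gives
g_{w_j} = a w_j^(a-1) conj(w_j)^b f_j and g_{conj w_j} = b w_j^a conj(w_j)^(b-1) f_j, with the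
partial derivatives f_j of f taken at h(w). For a, b \<ge> 1 the two brackets in C_{j,k} are then
a w_j w_k conj(d) and b w_j w_k d for one and the same
d = w_k^(a-1) conj(w_k)^(b-1) f_k - w_j^(a-1) conj(w_j)^(b-1) f_j, so
C_{j,k} = (a^2 - b^2) |w_j w_k d|^2; for b = 0 (resp. a = 0) the second (resp. first) bracket
vanishes. Thus C_g has the sign of a - b on all of h^{-1}(B(0,r)), which is an open
neighbourhood of 0 as soon as a \<noteq> b.\<close>

definition power_cnj_map :: "nat \<Rightarrow> nat \<Rightarrow> complex^'n \<Rightarrow> complex^'n" where
  "power_cnj_map a b w = (\<chi> j. w$j ^ a * cnj (w$j) ^ b)"

definition power_cnj_dz :: "nat \<Rightarrow> nat \<Rightarrow> complex \<Rightarrow> complex" where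
  "power_cnj_dz a b z = of_nat a * z ^ (a - 1) * cnj z ^ b"

definition power_cnj_dzbar :: "nat \<Rightarrow> nat \<Rightarrow> complex \<Rightarrow> complex" where
  "power_cnj_dzbar a b z = of_nat b * z ^ a * cnj z ^ (b - 1)"

lemma mixed_pullback_eq_comp: "mixed_pullback f a b = f \<circ> power_cnj_map a b"
  by (simp add: fun_eq_iff mixed_pullback_def power_cnj_map_def)

lemma has_derivative_vec_lambda:
  fixes F :: "'a::euclidean_space \<Rightarrow> 'm::finite \<Rightarrow> 'b::real_normed_vector"
  assumes "\<And>i. ((\<lambda>x. F x i) has_derivative D i) (at w)"
  shows "((\<lambda>x. \<chi> i. F x i) has_derivative (\<lambda>v. \<chi> i. D i v)) (at w)"
proof -
  have "linear (D i)" for i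
    using assms has_derivative_linear by blast
  then have "linear (\<lambda>v. \<chi> i. D i v)"
    by (auto simp: linear_iff vec_eq_iff)
  then have "bounded_linear (\<lambda>v. \<chi> i. D i v)"
    by (simp add: linear_conv_bounded_linear)
  moreover have "((\<lambda>y. (1 / norm (y - w)) *\<^sub>R (F y i - (F w i + D i (y - w)))) \<longlongrightarrow> 0) (at w)" for i
    using assms[of i] unfolding has_derivative_within[where s=UNIV] by simp
  ultimately show ?thesis
    unfolding has_derivative_within[where s=UNIV] by (auto intro!: vec_tendstoI)
qed

lemma has_derivative_power_cnj:
  fixes z :: complex
  shows "((\<lambda>z. z ^ a * cnj z ^ b) has_derivative
           (\<lambda>v. power_cnj_dz a b z * v + power_cnj_dzbar a b z * cnj v)) (at z)"
  unfolding power_cnj_dz_def power_cnj_dzbar_def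
  by (rule has_derivative_eq_rhs,
      rule has_derivative_mult[OF has_derivative_power[OF has_derivative_ident]
                                  has_derivative_power[OF has_derivative_cnj[OF has_derivative_ident]]])
     (simp add: fun_eq_iff mult_ac add.commute)

lemma has_derivative_power_cnj_map:
  "(power_cnj_map a b has_derivative
     (\<lambda>v. \<chi> j. power_cnj_dz a b (w$j) * v$j + power_cnj_dzbar a b (w$j) * cnj (v$j))) (at w)"
  unfolding power_cnj_map_def
  by (intro has_derivative_vec_lambda
        has_derivative_compose[OF bounded_linear_imp_has_derivative[OF bounded_linear_vec_nth]
                                  has_derivative_power_cnj])

lemma continuous_on_power_cnj_map: "continuous_on S (power_cnj_map a b)"
  using has_derivative_continuous[OF has_derivative_power_cnj_map]
  by (intro continuous_at_imp_continuous_on) blast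

lemma power_cnj_map_0:
  assumes "a \<noteq> b"
  shows "power_cnj_map a b 0 = 0"
  using assms by (simp add: power_cnj_map_def vec_eq_iff power_0_left)

lemma wirtinger_of_has_derivative:
  assumes "(g has_derivative D) (at w)"
  shows "wirt_w g w j = (D (axis j 1) - \<i> * D (axis j \<i>)) / 2"
    and "wirt_wbar g w j = (D (axis j 1) + \<i> * D (axis j \<i>)) / 2"
  using frechet_derivative_at[OF assms]
  by (simp_all add: wirt_w_def wirt_wbar_def dx_def dy_def)

lemma wirtinger_mixed_pullback:
  fixes f :: "complex^'n \<Rightarrow> complex"
  assumes L: "(f has_derivative L) (at (power_cnj_map a b w))"
    and clin: "\<forall>c v. L (c *s v) = c * L v"
  shows "wirt_w (mixed_pullback f a b) w j = power_cnj_dz a b (w$j) * L (axis j 1)"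
    and "wirt_wbar (mixed_pullback f a b) w j = power_cnj_dzbar a b (w$j) * L (axis j 1)"
proof -
  let ?A = "power_cnj_dz a b (w$j)" and ?B = "power_cnj_dzbar a b (w$j)"
  have L_axis: "L (axis j c) = c * L (axis j 1)" for c
  proof -
    have "axis j c = c *s axis j (1::complex)"
      by (simp add: vec_eq_iff axis_def)
    then show ?thesis
      using clin by simp
  qed
  have D: "(mixed_pullback f a b has_derivative
      (\<lambda>v. L (\<chi> i. power_cnj_dz a b (w$i) * v$i + power_cnj_dzbar a b (w$i) * cnj (v$i)))) (at w)"
    unfolding mixed_pullback_eq_comp o_def by (rule has_derivative_compose[OF has_derivative_power_cnj_map L])
  have image_axis: "(\<chi> i. power_cnj_dz a b (w$i) * axis j c $ i
                           + power_cnj_dzbar a b (w$i) * cnj (axis j c $ i))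
      = axis j (?A * c + ?B * cnj c)" for c
    by (simp add: vec_eq_iff axis_def)
  have D_axis: "L (\<chi> i. power_cnj_dz a b (w$i) * axis j c $ i
                            + power_cnj_dzbar a b (w$i) * cnj (axis j c $ i))
      = (?A * c + ?B * cnj c) * L (axis j 1)" for c
    unfolding image_axis by (rule L_axis)
  show "wirt_w (mixed_pullback f a b) w j = ?A * L (axis j 1)"
    and "wirt_wbar (mixed_pullback f a b) w j = ?B * L (axis j 1)"
    unfolding wirtinger_of_has_derivative[OF D] D_axis by (simp_all add: algebra_simps)
qed

lemma power_cnj_bracket_identity:
  fixes x y p q :: complex
  assumes "a \<ge> 1" "b \<ge> 1"
  shows "(cmod (x * cnj (power_cnj_dz a b y * q) - y * cnj (power_cnj_dz a b x * p)))\<^sup>2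
       - (cmod (x * (power_cnj_dzbar a b y * q) - y * (power_cnj_dzbar a b x * p)))\<^sup>2
       = (real a ^ 2 - real b ^ 2)
         * (cmod x * cmod y * cmod (y^(a-1) * cnj y^(b-1) * q - x^(a-1) * cnj x^(b-1) * p))\<^sup>2"
proof -
  obtain a' b' where ab: "a = Suc a'" "b = Suc b'"
    using assms by (cases a; cases b) auto
  define d where "d = y^(a-1) * cnj y^(b-1) * q - x^(a-1) * cnj x^(b-1) * p"
  have conj_bracket: "x * cnj (power_cnj_dz a b y * q) - y * cnj (power_cnj_dz a b x * p)
      = of_nat a * x * y * cnj d"
    and bracket: "x * (power_cnj_dzbar a b y * q) - y * (power_cnj_dzbar a b x * p) = of_nat b * x * y * d"
    unfolding d_def power_cnj_dz_def power_cnj_dzbar_def ab by (simp_all add: right_diff_distrib mult_ac)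
  show ?thesis
    unfolding d_def[symmetric] conj_bracket bracket
    by (simp add: norm_mult power_mult_distrib left_diff_distrib)
qed

lemma C_jk_mixed_pullback:
  fixes f :: "complex^'n \<Rightarrow> complex"
  assumes "(f has_derivative L) (at (power_cnj_map a b w))" and "\<forall>c v. L (c *s v) = c * L v"
  shows "C_jk (mixed_pullback f a b) w j k =
      (cmod (w$j * cnj (power_cnj_dz a b (w$k) * L (axis k 1))
             - w$k * cnj (power_cnj_dz a b (w$j) * L (axis j 1))))\<^sup>2
    - (cmod (w$j * (power_cnj_dzbar a b (w$k) * L (axis k 1))
             - w$k * (power_cnj_dzbar a b (w$j) * L (axis j 1))))\<^sup>2"
  unfolding C_jk_def wirtinger_mixed_pullback[OF assms] ..

lemma C_jk_mixed_pullback_nonneg: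
  fixes f :: "complex^'n \<Rightarrow> complex"
  assumes "(f has_derivative L) (at (power_cnj_map a b w))" and "\<forall>c v. L (c *s v) = c * L v"
    and "b < a"
  shows "C_jk (mixed_pullback f a b) w j k \<ge> 0"
proof (cases "b = 0")
  case True
  then show ?thesis
    unfolding C_jk_mixed_pullback[OF assms(1,2)] by (simp add: power_cnj_dzbar_def)
next
  case False
  with \<open>b < a\<close> have "real a ^ 2 - real b ^ 2 \<ge> 0"
    by (simp add: power_mono)
  with False \<open>b < a\<close> show ?thesis
    unfolding C_jk_mixed_pullback[OF assms(1,2)] by (subst power_cnj_bracket_identity) auto
qed

lemma C_jk_mixed_pullback_nonpos:
  fixes f :: "complex^'n \<Rightarrow> complex"
  assumes "(f has_derivative L) (at (power_cnj_map a b w))" and "\<forall>c v. L (c *s v) = c * L v"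
    and "a < b"
  shows "C_jk (mixed_pullback f a b) w j k \<le> 0"
proof (cases "a = 0")
  case True
  then show ?thesis
    unfolding C_jk_mixed_pullback[OF assms(1,2)] by (simp add: power_cnj_dz_def)
next
  case False
  with \<open>a < b\<close> have "real a ^ 2 - real b ^ 2 \<le> 0"
    by (simp add: power_mono)
  with False \<open>a < b\<close> show ?thesis
    unfolding C_jk_mixed_pullback[OF assms(1,2)]
    by (subst power_cnj_bracket_identity) (auto simp: mult_nonpos_nonneg)
qed

lemma C_g_mixed_pullback_sign:
  fixes f :: "complex^'n::{finite,linorder} \<Rightarrow> complex"
  assumes "(f has_derivative L) (at (power_cnj_map a b w))" and "\<forall>c v. L (c *s v) = c * L v"
  shows "(b < a \<longrightarrow> C_g (mixed_pullback f a b) w \<ge> 0)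
       \<and> (a < b \<longrightarrow> C_g (mixed_pullback f a b) w \<le> 0)"
  unfolding C_g_def
  using C_jk_mixed_pullback_nonneg[OF assms] C_jk_mixed_pullback_nonpos[OF assms]
  by (auto intro!: sum_nonneg sum_nonpos)

theorem lemma12:
  fixes f :: "complex^'n::{finite,linorder} \<Rightarrow> complex" and a b :: nat and r :: real
  assumes "r > 0" and "holomorphic_vec_on f (ball 0 r)"
  shows "(b < a \<longrightarrow> (\<exists>U. open U \<and> 0 \<in> U \<and>
            (\<forall>w\<in>U. mixed_pullback f a b w = 0 \<longrightarrow> C_g (mixed_pullback f a b) w \<ge> 0)))
       \<and> (a < b \<longrightarrow> (\<exists>U. open U \<and> 0 \<in> U \<and>
            (\<forall>w\<in>U. mixed_pullback f a b w = 0 \<longrightarrow> C_g (mixed_pullback f a b) w \<le> 0)))"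
proof -
  define U :: "(complex^'n::{finite,linorder}) set" where "U = power_cnj_map a b -` ball 0 r"
  have "open U"
    unfolding U_def by (rule open_vimage[OF open_ball continuous_on_power_cnj_map])
  moreover have "0 \<in> U" if "a \<noteq> b"
    using \<open>r > 0\<close> by (simp add: U_def power_cnj_map_0[OF that])
  moreover have "(b < a \<longrightarrow> C_g (mixed_pullback f a b) w \<ge> 0)
               \<and> (a < b \<longrightarrow> C_g (mixed_pullback f a b) w \<le> 0)" if "w \<in> U" for w
  proof -
    obtain L where "(f has_derivative L) (at (power_cnj_map a b w))" "\<forall>c v. L (c *s v) = c * L v"
      using assms(2) \<open>w \<in> U\<close> unfolding holomorphic_vec_on_def U_def by (fastforce simp: dist_norm)
    then show ?thesis by (rule C_g_mixed_pullback_sign)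
  qed
  ultimately show ?thesis
    by (metis less_irrefl)
qed

end
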